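(* Let $p>1$, $p'=p/(p-1)$, $C>0$, and define on $\Omega_C=\{(F,\mathbf{f},M):\mathbf{f}\ge0,\ \mathbf{f}^p\le F,\ 0\le M\le C\}$ $$\mathbb{B}(F,\mathbf{f},M;C)=C\left[(p')^pF-\frac{(p\mathbf{f})^p}{(p-1)\,(M/C+p-1)^{p-1}}\right].$$ Then $0\le\mathbb{B}(F,\mathbf{f},M;C)\le(p')^pCF$, $\mathbb{B}(t^pF,t\mathbf{f},M;C)=t^p\mathbb{B}(F,\mathbf{f},M;C)$ for $t\ge0$, and for all triples $(F,\mathbf{f},M),(F_\pm,\mathbf{f}_\pm,M_\pm)\in\Omega_C$ with $F=\tfrac12(F_++F_-)$, $\mathbf{f}=\tfrac12(\mathbf{f}_++\mathbf{f}_-)$, $M=\Delta M+\tfrac12(M_++M_-)$, $0\le\Delta M\le M$, $$\mathbb{B}(F,\mathbf{f},M;C)\ge\tfrac12\{\mathbb{B}(F_+,\mathbf{f}_+,M_+;C)+\mathbb{B}(F_-,\mathbf{f}_-,M_-;C)\}+\Delta M\,\mathbf{f}^p.$$ *)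

theory Defs
  imports Complex_Main
begin

definition conj_exp :: "real \<Rightarrow> real" where
  "conj_exp p = p / (p - 1)"

definition OmegaC :: "real \<Rightarrow> real \<Rightarrow> (real \<times> real \<times> real) set" where
  "OmegaC p C = {(F, f, M). f \<ge> 0 \<and> f powr p \<le> F \<and> 0 \<le> M \<and> M \<le> C}"

definition BB :: "real \<Rightarrow> real \<Rightarrow> real \<Rightarrow> real \<Rightarrow> real \<Rightarrow> real" where
  "BB p F f M C = C * ((conj_exp p) powr p * F
      - (p * f) powr p / ((p - 1) * (M / C + p - 1) powr (p - 1)))"

end

theory Submission
  imports Defs "HOL-Analysis.Analysis"
begin

text \<open>
  With \<open>x = M/C + p - 1\<close>, the function is \<open>C [(p')^p F - p^p/(p-1) \<cdot> f^p x^(1-p)]\<close>, and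
  \<open>f^p x^(1-p)\<close> is the perspective of the convex function \<open>u \<mapsto> u^p\<close>. It is therefore
  jointly convex in \<open>(f, x)\<close>, which gives the midpoint concavity, and convex decreasing
  in \<open>x\<close>: since \<open>x \<le> p\<close>, raising \<open>x\<close> by \<open>\<Delta>M/C\<close> lowers it by at least
  \<open>(p-1) f^p \<Delta>M / (C p^p)\<close>, which after scaling by \<open>C p^p/(p-1)\<close> is the extra
  term \<open>\<Delta>M f^p\<close>.
\<close>

lemma convex_on_powr_nonpos:
  fixes q :: real
  assumes "q \<le> 0"
  shows "convex_on {0<..} (\<lambda>x. x powr q)"
proof (rule f''_ge0_imp_convex[where f' = "\<lambda>x. q * x powr (q - 1)"
                                 and f'' = "\<lambda>x. q * ((q - 1) * x powr (q - 1 - 1))"])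
  fix x :: real assume "x \<in> {0<..}"
  then show "((\<lambda>x. x powr q) has_real_derivative q * x powr (q - 1)) (at x)"
    and "((\<lambda>x. q * x powr (q - 1)) has_real_derivative q * ((q - 1) * x powr (q - 1 - 1))) (at x)"
    by (auto intro!: derivative_eq_intros)
  show "0 \<le> q * ((q - 1) * x powr (q - 1 - 1))"
    using assms by (intro mult_nonpos_nonpos mult_nonpos_nonneg) auto
qed simp

lemma powr_ge_tangent:
  fixes q x y :: real
  assumes "q \<le> 0 \<or> 1 \<le> q" "x > 0" "y > 0"
  shows "x powr q - y powr q \<ge> q * y powr (q - 1) * (x - y)"
proof -
  have "convex_on {0<..} (\<lambda>x. x powr q)"
    using assms(1) powr_convex convex_on_powr_nonpos by blast
  moreover have "((\<lambda>x. x powr q) has_real_derivative q * y powr (q - 1)) (at y within {0<..})"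
    using assms(3) by (auto intro!: derivative_eq_intros)
  ultimately show ?thesis
    using assms(2,3) by (intro convex_on_imp_above_tangent) (auto simp: interior_open)
qed

definition perspective_powr :: "real \<Rightarrow> real \<Rightarrow> real \<Rightarrow> real" where
  "perspective_powr p f x = f powr p * x powr (1 - p)"

lemma perspective_powr_nonneg: "perspective_powr p f x \<ge> 0"
  by (simp add: perspective_powr_def)

lemma perspective_powr_eq:
  assumes "x > 0" "f \<ge> 0"
  shows "perspective_powr p f x = x * (f / x) powr p"
  using assms by (simp add: perspective_powr_def powr_divide powr_diff)

text \<open>The perspective is the supremum of these affine minorants, attained at \<open>v = f/x\<close>.\<close>

lemma perspective_powr_ge_affine:
  fixes p f x v :: real
  assumes "p \<ge> 1" "f \<ge> 0" "x > 0" "v > 0"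
  shows "perspective_powr p f x \<ge> p * v powr (p - 1) * f - (p - 1) * v powr p * x"
proof (cases "f = 0")
  case True
  then show ?thesis
    using assms by (simp add: perspective_powr_def)
next
  case False
  have v_pow: "v powr (p - 1) * v = v powr p"
    using assms by (simp add: powr_diff)
  have "x * ((f / x) powr p - v powr p) \<ge> x * (p * v powr (p - 1) * (f / x - v))"
    using assms False by (intro mult_left_mono powr_ge_tangent) auto
  also have "x * (p * v powr (p - 1) * (f / x - v)) = p * v powr (p - 1) * f - p * v powr p * x"
    using assms v_pow by (simp add: field_simps)
  finally show ?thesis
    using assms perspective_powr_eq[of x f p] by (simp add: algebra_simps)
qed

lemma perspective_powr_eq_affine:
  fixes p f x :: real
  assumes "f > 0" "x > 0"
  shows "perspective_powr p f x = p * (f / x) powr (p - 1) * f - (p - 1) * (f / x) powr p * x"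
proof -
  have "(f / x) powr (p - 1) * f = (f / x) powr p * x"
    using assms by (simp add: powr_diff field_simps)
  then show ?thesis
    using assms perspective_powr_eq[of x f p] by (simp add: algebra_simps)
qed

lemma perspective_powr_convex:
  fixes p t f1 f2 x1 x2 :: real
  assumes "p \<ge> 1" "0 \<le> t" "t \<le> 1" "f1 \<ge> 0" "f2 \<ge> 0" "x1 > 0" "x2 > 0"
  shows "perspective_powr p (t * f1 + (1 - t) * f2) (t * x1 + (1 - t) * x2)
           \<le> t * perspective_powr p f1 x1 + (1 - t) * perspective_powr p f2 x2"
proof -
  define f where "f = t * f1 + (1 - t) * f2"
  define x where "x = t * x1 + (1 - t) * x2"
  have "x > 0"
    unfolding x_def using assms by (cases "t = 0") (auto intro: add_pos_nonneg)
  have "f \<ge> 0"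
    unfolding f_def using assms by simp
  show ?thesis
  proof (cases "f = 0")
    case True
    then show ?thesis
      using assms perspective_powr_nonneg unfolding f_def x_def
      by (simp add: perspective_powr_def)
  next
    case False
    define v where "v = f / x"
    have "v > 0"
      unfolding v_def using \<open>f \<ge> 0\<close> False \<open>x > 0\<close> by simp
    let ?a = "p * v powr (p - 1)" and ?b = "(p - 1) * v powr p"
    have "perspective_powr p f x = ?a * f - ?b * x"
      unfolding v_def using \<open>f \<ge> 0\<close> False \<open>x > 0\<close> by (intro perspective_powr_eq_affine) auto
    also have "\<dots> = t * (?a * f1 - ?b * x1) + (1 - t) * (?a * f2 - ?b * x2)"
      unfolding f_def x_def by (simp add: algebra_simps)
    also have "\<dots> \<le> t * perspective_powr p f1 x1 + (1 - t) * perspective_powr p f2 x2"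
      using assms \<open>v > 0\<close>
      by (intro add_mono mult_left_mono perspective_powr_ge_affine) auto
    finally show ?thesis
      unfolding f_def x_def .
  qed
qed

lemma perspective_powr_decrease:
  fixes p f a y :: real
  assumes "p > 1" "a > 0" "y > 0"
  shows "perspective_powr p f a - perspective_powr p f y
           \<ge> (p - 1) * y powr (- p) * (y - a) * f powr p"
proof -
  have "(1 - p) * y powr (1 - p - 1) * (a - y) \<le> a powr (1 - p) - y powr (1 - p)"
    using assms by (intro powr_ge_tangent) auto
  then have "(p - 1) * y powr (- p) * (y - a) * f powr p
               \<le> (a powr (1 - p) - y powr (1 - p)) * f powr p"
    by (intro mult_right_mono) (simp_all add: algebra_simps)
  then show ?thesis
    by (simp add: perspective_powr_def algebra_simps)
qed

lemma BB_eq_perspective_powr: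
  assumes "p > 1" "C > 0" "M \<ge> 0" "f \<ge> 0"
  shows "BB p F f M C
           = C * (conj_exp p powr p * F - p powr p / (p - 1) * perspective_powr p f (M / C + p - 1))"
proof -
  have "(M / C + p - 1) powr (1 - p) = inverse ((M / C + p - 1) powr (p - 1))"
    using powr_minus[of "M / C + p - 1" "p - 1"] by simp
  then show ?thesis
    unfolding BB_def perspective_powr_def by (simp add: powr_mult field_simps)
qed

lemma BB_bounds:
  assumes "p > 1" "C > 0" "(F, f, M) \<in> OmegaC p C"
  shows "0 \<le> BB p F f M C" "BB p F f M C \<le> conj_exp p powr p * C * F"
proof -
  have f: "f \<ge> 0" "f powr p \<le> F" and M: "0 \<le> M" "M \<le> C"
    using assms(3) by (auto simp: OmegaC_def)
  define K where "K = p powr p / (p - 1)"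
  define P where "P = perspective_powr p f (M / C + p - 1)"
  have "K \<ge> 0" "P \<ge> 0"
    unfolding K_def P_def using assms(1) perspective_powr_nonneg by auto
  have BB: "BB p F f M C = C * (conj_exp p powr p * F - K * P)"
    unfolding K_def P_def using BB_eq_perspective_powr[OF assms(1,2) M(1) f(1)] .
  have "P \<le> f powr p * (p - 1) powr (1 - p)"
    unfolding P_def perspective_powr_def using assms(1,2) M(1)
    by (intro mult_left_mono powr_mono2') auto
  then have "K * P \<le> K * (f powr p * (p - 1) powr (1 - p))"
    using \<open>K \<ge> 0\<close> by (rule mult_left_mono)
  also have "\<dots> = conj_exp p powr p * f powr p"
    unfolding K_def using assms(1) by (simp add: conj_exp_def powr_divide powr_diff field_simps)
  also have "\<dots> \<le> conj_exp p powr p * F"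
    using f(2) by (intro mult_left_mono) auto
  finally show "0 \<le> BB p F f M C"
    unfolding BB using assms(2) by simp
  show "BB p F f M C \<le> conj_exp p powr p * C * F"
    unfolding BB using assms(2) \<open>K \<ge> 0\<close> \<open>P \<ge> 0\<close> by (simp add: algebra_simps)
qed

lemma BB_homogeneous:
  assumes "t \<ge> 0" "f \<ge> 0"
  shows "BB p (t powr p * F) (t * f) M C = t powr p * BB p F f M C"
  using assms unfolding BB_def by (simp add: powr_mult algebra_simps)

text \<open>The theorem's hypothesis \<open>\<Delta>M \<le> M\<close> is implied by \<open>M\<^sub>\<plusminus> \<ge> 0\<close>, so it is dropped here.\<close>

lemma BB_midpoint_concave:
  assumes "p > 1" "C > 0"
    and "(F, f, M) \<in> OmegaC p C" "(Fp, fp, Mp) \<in> OmegaC p C" "(Fm, fm, Mm) \<in> OmegaC p C"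
    and F: "F = (Fp + Fm) / 2" and f: "f = (fp + fm) / 2" and M: "M = dM + (Mp + Mm) / 2"
    and "0 \<le> dM"
  shows "BB p F f M C \<ge> (BB p Fp fp Mp C + BB p Fm fm Mm C) / 2 + dM * f powr p"
proof -
  from assms(3-5) have h: "f \<ge> 0" "0 \<le> M" "M \<le> C" "fp \<ge> 0" "Mp \<ge> 0" "fm \<ge> 0" "Mm \<ge> 0"
    by (auto simp: OmegaC_def)
  define x1 where "x1 = Mp / C + p - 1"
  define x2 where "x2 = Mm / C + p - 1"
  define y where "y = M / C + p - 1"
  define K where "K = p powr p / (p - 1)"
  have "Mp / C \<ge> 0" "Mm / C \<ge> 0" "M / C \<ge> 0"
    using h assms(2) by simp_all
  then have "x1 > 0" "x2 > 0" "y > 0"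
    unfolding x1_def x2_def y_def using assms(1) by linarith+
  have "y \<le> p"
    unfolding y_def using h assms(2) by simp
  have y_eq: "y = (x1 + x2) / 2 + dM / C"
    unfolding y_def x1_def x2_def M using assms(2) by (simp add: field_simps)
  define gap where
    "gap = (perspective_powr p fp x1 + perspective_powr p fm x2) / 2 - perspective_powr p f y"
  have "perspective_powr p f ((x1 + x2) / 2)
          \<le> (perspective_powr p fp x1 + perspective_powr p fm x2) / 2"
    using perspective_powr_convex[of p "1/2" fp fm x1 x2] h assms(1) \<open>x1 > 0\<close> \<open>x2 > 0\<close>
    unfolding f by (simp add: field_simps)
  moreover have "perspective_powr p f ((x1 + x2) / 2) - perspective_powr p f y
                   \<ge> (p - 1) * y powr (- p) * (dM / C) * f powr p"
    using perspective_powr_decrease[of p "(x1 + x2) / 2" y f] assms(1) \<open>x1 > 0\<close> \<open>x2 > 0\<close> \<open>y > 0\<close>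
    unfolding y_eq by simp
  ultimately have "gap \<ge> (p - 1) * y powr (- p) * (dM / C) * f powr p"
    unfolding gap_def by linarith
  then have "C * K * gap \<ge> C * K * ((p - 1) * y powr (- p) * (dM / C) * f powr p)"
    unfolding K_def using assms(1,2) by (intro mult_left_mono) auto
  also have "C * K * ((p - 1) * y powr (- p) * (dM / C) * f powr p) = (p / y) powr p * (dM * f powr p)"
    unfolding K_def using assms(1,2) \<open>y > 0\<close> by (simp add: powr_divide powr_minus field_simps)
  also have "(p / y) powr p * (dM * f powr p) \<ge> 1 * (dM * f powr p)"
    using \<open>y > 0\<close> \<open>y \<le> p\<close> assms(1) \<open>0 \<le> dM\<close>
    by (intro mult_right_mono ge_one_powr_ge_zero) auto
  finally have "C * K * gap \<ge> dM * f powr p"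
    by simp
  moreover have "BB p F f M C - (BB p Fp fp Mp C + BB p Fm fm Mm C) / 2 = C * K * gap"
  proof -
    have "BB p F f M C = C * (conj_exp p powr p * F - K * perspective_powr p f y)"
      "BB p Fp fp Mp C = C * (conj_exp p powr p * Fp - K * perspective_powr p fp x1)"
      "BB p Fm fm Mm C = C * (conj_exp p powr p * Fm - K * perspective_powr p fm x2)"
      unfolding K_def x1_def x2_def y_def using BB_eq_perspective_powr assms(1,2) h by simp_all
    then show ?thesis
      unfolding gap_def F by (simp add: field_simps)
  qed
  ultimately show ?thesis
    by simp
qed

theorem mainTheorem10:
  fixes p C :: real
  assumes "p > 1" and "C > 0"
  shows "(\<forall>F f M. (F, f, M) \<in> OmegaC p C \<longrightarrow>
            0 \<le> BB p F f M C \<and> BB p F f M C \<le> (conj_exp p) powr p * C * F)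
       \<and> (\<forall>F f M t. (F, f, M) \<in> OmegaC p C \<longrightarrow> t \<ge> 0 \<longrightarrow>
            BB p (t powr p * F) (t * f) M C = t powr p * BB p F f M C)
       \<and> (\<forall>F f M Fp fp Mp Fm fm Mm dM.
            (F, f, M) \<in> OmegaC p C \<longrightarrow> (Fp, fp, Mp) \<in> OmegaC p C \<longrightarrow>
            (Fm, fm, Mm) \<in> OmegaC p C \<longrightarrow>
            F = (Fp + Fm) / 2 \<longrightarrow> f = (fp + fm) / 2 \<longrightarrow>
            M = dM + (Mp + Mm) / 2 \<longrightarrow> 0 \<le> dM \<longrightarrow> dM \<le> M \<longrightarrow>
            BB p F f M C \<ge> (BB p Fp fp Mp C + BB p Fm fm Mm C) / 2 + dM * f powr p)"
proof (intro conjI allI impI)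
  fix F f M t :: real
  assume "(F, f, M) \<in> OmegaC p C"
  then show "0 \<le> BB p F f M C" "BB p F f M C \<le> conj_exp p powr p * C * F"
    using BB_bounds[OF assms] by blast+
  assume "t \<ge> 0"
  with \<open>(F, f, M) \<in> OmegaC p C\<close> show "BB p (t powr p * F) (t * f) M C = t powr p * BB p F f M C"
    by (intro BB_homogeneous) (auto simp: OmegaC_def)
qed (rule BB_midpoint_concave[OF assms]; assumption)+

end
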